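(* Let $\mathcal P$ be a pre-Hahn-localizable family of probability measures on $(\Omega,\mathcal F)$ with a localization $\mathcal Q$ whose supports $\{S_Q\}$ are pairwise disjoint, and let $\mathcal H_{\mathcal F}^{\mathcal Q}$ be its Hahn-extension. Then $\mathcal P^{\mathcal Q}$ is Hahn-localizable on $(\Omega,\mathcal H_{\mathcal F}^{\mathcal Q})$, and $\mathcal Q^{\mathcal Q}=\{Q^{\mathcal Q}:Q\in\mathcal Q\}$ is a Hahn-localization of $\mathcal P^{\mathcal Q}$ with support sets $S_{Q^{\mathcal Q}}=S_Q$.
   Context: $\mathcal A\lll\mathcal B$ means every $A\in\mathcal A$ is absolutely continuous w.r.t. some $B\in\mathcal B$; $\mathrm{sconv}$ denotes countable convex combinations. On a measurable space $(\Omega,\mathcal G)$, a family $\mathcal P$ is pre-Hahn-localizable with localization $\mathcal Q$ (probability measures on $\mathcal G$) and supports $S_Q\in\mathcal G$ if $Q(S_R)=\delta_{QR}$ for $Q,R\in\mathcal Q$ and $\mathcal Q\lll\mathcal P\lll\mathrm{sconv}(\mathcal Q)$; this localization is a Hahn-localization (and $\mathcal P$ Hahn-localizable) if for every family $E_Q\in\mathcal G$, $E_Q\subseteq S_Q$, there is $S\in\mathcal G$ with $Q(E_Q\setminus S)=0$ for all $Q$, and any $F\in\mathcal G$ with $Q(E_Q\setminus F)=0$ for all $Q$ satisfies $Q(S\setminus F)=0$ for all $Q$. Hahn-extension: $\mathcal H_{\mathcal F}^{\mathcal Q}=\sigma\big(\mathcal F\cup\{\bigcup_{Q}E_Q:E_Q\in\mathcal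 F,E_Q\subseteq S_Q\}\big)$. For a probability measure $P$ on $\mathcal F$ absolutely continuous w.r.t. some element of $\mathcal P$ (including elements of $\mathcal P$ and $\mathcal Q$), $P^{\mathcal Q}(A)=\sum_{Q\in\mathcal Q(P)}P(A\cap S_Q)$ with $\mathcal Q(P)=\{Q:P(S_Q)>0\}$ (countable), a measure on $\mathcal H_{\mathcal F}^{\mathcal Q}$ extending $P$; $\mathcal P^{\mathcal Q}=\{P^{\mathcal Q}:P\in\mathcal P\}$. *)

theory Defs
  imports "HOL-Probability.Probability"
begin

text \<open>The measurable space (Omega, F) is represented by a measure M (only space M and
  sets M are used). A probability measure on (Omega, F) is a prob_space P with sets P = sets M.\<close>

definition prob_on :: "'a measure \<Rightarrow> 'a measure \<Rightarrow> bool" where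
  "prob_on M P \<longleftrightarrow> prob_space P \<and> sets P = sets M"

text \<open>A <<< B: every element of A is absolutely continuous w.r.t. some element of B.
  (absolutely_continuous B A means A << B.)\<close>

definition ac_fam :: "'a measure set \<Rightarrow> 'a measure set \<Rightarrow> bool" where
  "ac_fam \<A> \<B> \<longleftrightarrow> (\<forall>A\<in>\<A>. \<exists>B\<in>\<B>. absolutely_continuous B A)"

definition sconv :: "'a measure \<Rightarrow> 'a measure set \<Rightarrow> 'a measure set" where
  "sconv M \<Q> = {N. sets N = sets M \<and>
     (\<exists>(c :: nat \<Rightarrow> ennreal) Qs. (\<forall>n. Qs n \<in> \<Q>) \<and> (\<Sum>n. c n) = 1 \<and>
        (\<forall>A\<in>sets M. emeasure N A = (\<Sum>n. c n * emeasure (Qs n) A)))}"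

definition pre_hahn_loc ::
  "'a measure \<Rightarrow> 'a measure set \<Rightarrow> 'a measure set \<Rightarrow> ('a measure \<Rightarrow> 'a set) \<Rightarrow> bool" where
  "pre_hahn_loc M \<P> \<Q> S \<longleftrightarrow>
     (\<forall>P\<in>\<P>. prob_on M P) \<and>
     (\<forall>Q\<in>\<Q>. prob_on M Q \<and> S Q \<in> sets M) \<and>
     (\<forall>Q\<in>\<Q>. \<forall>R\<in>\<Q>. emeasure Q (S R) = (if Q = R then 1 else 0)) \<and>
     ac_fam \<Q> \<P> \<and> ac_fam \<P> (sconv M \<Q>)"

definition hahn_loc ::
  "'a measure \<Rightarrow> 'a measure set \<Rightarrow> 'a measure set \<Rightarrow> ('a measure \<Rightarrow> 'a set) \<Rightarrow> bool" where
  "hahn_loc M \<P> \<Q> S \<longleftrightarrow> pre_hahn_loc M \<P> \<Q> S \<and>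
     (\<forall>E. (\<forall>Q\<in>\<Q>. E Q \<in> sets M \<and> E Q \<subseteq> S Q) \<longrightarrow>
        (\<exists>T\<in>sets M. (\<forall>Q\<in>\<Q>. emeasure Q (E Q - T) = 0) \<and>
           (\<forall>F\<in>sets M. (\<forall>Q\<in>\<Q>. emeasure Q (E Q - F) = 0) \<longrightarrow>
              (\<forall>Q\<in>\<Q>. emeasure Q (T - F) = 0))))"

definition hahn_localizable :: "'a measure \<Rightarrow> 'a measure set \<Rightarrow> bool" where
  "hahn_localizable M \<P> \<longleftrightarrow> (\<exists>\<Q> S. hahn_loc M \<P> \<Q> S)"

definition hahn_extension :: "'a measure \<Rightarrow> 'a measure set \<Rightarrow> ('a measure \<Rightarrow> 'a set) \<Rightarrow> 'a set set" where
  "hahn_extension M \<Q> S = sigma_sets (space M)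
     (sets M \<union> {\<Union>Q\<in>\<Q>. E Q | E. \<forall>Q\<in>\<Q>. E Q \<in> sets M \<and> E Q \<subseteq> S Q})"

definition hahn_ext_space :: "'a measure \<Rightarrow> 'a measure set \<Rightarrow> ('a measure \<Rightarrow> 'a set) \<Rightarrow> 'a measure" where
  "hahn_ext_space M \<Q> S = measure_of (space M) (hahn_extension M \<Q> S) (\<lambda>_. 0)"

definition loc_ext :: "'a measure \<Rightarrow> 'a measure set \<Rightarrow> ('a measure \<Rightarrow> 'a set) \<Rightarrow> 'a measure \<Rightarrow> 'a measure" where
  "loc_ext M \<Q> S P = measure_of (space M) (hahn_extension M \<Q> S)
     (\<lambda>A. \<Sum>\<^sub>\<infinity>Q\<in>{Q\<in>\<Q>. emeasure P (S Q) > 0}. emeasure P (A \<inter> S Q))"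

end

theory Submission
  imports Defs
begin

(* Disjointness of the supports is what makes A \<inter> S Q an F-set for every A in the Hahn
   extension H, by induction over the generated sigma-algebra. Every P in \<P> is dominated by a
   countable convex combination of localizers, so it is concentrated on countably many supports;
   for such P the sum defining P^Q collapses to P (A \<inter> \<Union>\<^sub>Q S Q), so P^Q is a
   probability measure on H whose null sets are the A with P (A \<inter> S Q) = 0 for all Q.
   Absolute continuity and countable convex combinations therefore carry over from \<P>, \<Q>
   to \<P>^Q, \<Q>^Q. For the Hahn property, the union of a family E Q \<subseteq> S Q of H-sets lies
   in H by the very definition of H, and it is an essential supremum because it meets each S Q
   exactly in E Q. *)

lemma infsum_emeasure_disjoint:
  assumes I: "countable I" and X: "\<And>i. i \<in> I \<Longrightarrow> X i \<in> sets P"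
    and disj: "disjoint_family_on X I"
  shows "(\<Sum>\<^sub>\<infinity>i\<in>I. emeasure P (X i)) = emeasure P (\<Union>i\<in>I. X i)"
proof (cases "I = {}")
  case False
  define g where "g = from_nat_into I"
  have I_eq: "I = range g"
    unfolding g_def using range_from_nat_into[OF False I] by simp
  have "(\<Sum>\<^sub>\<infinity>i\<in>I. emeasure P (X i)) = (SUP F\<in>{F. finite F \<and> F \<subseteq> I}. emeasure P (\<Union>i\<in>F. X i))"
    using X disj
    by (auto simp: nonneg_infsum_complete intro!: SUP_cong sum_emeasure
             intro: disjoint_family_on_mono)
  also have "\<dots> = emeasure P (\<Union>i\<in>I. X i)"
  proof (rule antisym)
    show "(SUP F\<in>{F. finite F \<and> F \<subseteq> I}. emeasure P (\<Union>i\<in>F. X i)) \<le> emeasure P (\<Union>i\<in>I. X i)"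
      using X I by (intro SUP_least emeasure_mono sets.countable_UN') auto
  next
    define A where "A n = (\<Union>i\<in>g ` {..<n}. X i)" for n
    have "emeasure P (\<Union>i\<in>I. X i) = emeasure P (\<Union>n. A n)"
      unfolding I_eq A_def by (rule arg_cong[where f="emeasure P"]) auto
    also have "\<dots> = (SUP n. emeasure P (A n))"
      using X unfolding I_eq A_def
      by (intro SUP_emeasure_incseq[symmetric]) (auto simp: incseq_def, meson lessThan_iff less_le_trans)
    also have "\<dots> \<le> (SUP F\<in>{F. finite F \<and> F \<subseteq> I}. emeasure P (\<Union>i\<in>F. X i))"
      unfolding A_def I_eq by (intro SUP_mono) blast
    finally show "emeasure P (\<Union>i\<in>I. X i) \<le> (SUP F\<in>{F. finite F \<and> F \<subseteq> I}. emeasure P (\<Union>i\<in>F. X i))" .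
  qed
  finally show ?thesis .
qed simp

locale disjoint_supports =
  fixes M :: "'a measure" and \<Q> :: "'a measure set" and S :: "'a measure \<Rightarrow> 'a set"
  assumes sets_support: "Q \<in> \<Q> \<Longrightarrow> S Q \<in> sets M"
    and disjoint_support: "Q \<in> \<Q> \<Longrightarrow> R \<in> \<Q> \<Longrightarrow> Q \<noteq> R \<Longrightarrow> S Q \<inter> S R = {}"
begin

lemma hahn_generators_subset_Pow:
  "sets M \<union> {\<Union>Q\<in>\<Q>. E Q | E. \<forall>Q\<in>\<Q>. E Q \<in> sets M \<and> E Q \<subseteq> S Q} \<subseteq> Pow (space M)"
  using sets.sets_into_space by fastforce

lemma sigma_algebra_hahn_extension: "sigma_algebra (space M) (hahn_extension M \<Q> S)"
  unfolding hahn_extension_def by (rule sigma_algebra_sigma_sets[OF hahn_generators_subset_Pow])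

lemma sigma_sets_hahn_extension:
  "sigma_sets (space M) (hahn_extension M \<Q> S) = hahn_extension M \<Q> S"
  unfolding hahn_extension_def by (rule sigma_sets_sigma_sets_eq[OF hahn_generators_subset_Pow])

lemma hahn_extension_subset_Pow: "hahn_extension M \<Q> S \<subseteq> Pow (space M)"
  unfolding hahn_extension_def using sigma_sets_into_sp[OF hahn_generators_subset_Pow] by blast

lemma sets_hahn_ext_space [simp]: "sets (hahn_ext_space M \<Q> S) = hahn_extension M \<Q> S"
  unfolding hahn_ext_space_def
  by (simp add: sets_measure_of[OF hahn_extension_subset_Pow] sigma_sets_hahn_extension)

lemma sets_loc_ext [simp]: "sets (loc_ext M \<Q> S P) = hahn_extension M \<Q> S"
  and space_loc_ext [simp]: "space (loc_ext M \<Q> S P) = space M"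
  unfolding loc_ext_def
  by (simp_all add: sets_measure_of[OF hahn_extension_subset_Pow] sigma_sets_hahn_extension
      space_measure_of_conv)

lemma sets_in_hahn_extension: "A \<in> sets M \<Longrightarrow> A \<in> hahn_extension M \<Q> S"
  unfolding hahn_extension_def by (intro sigma_sets.Basic UnI1)

lemma UN_Int_support:
  assumes "\<And>Q. Q \<in> \<Q> \<Longrightarrow> E Q \<subseteq> S Q" and "R \<in> \<Q>"
  shows "(\<Union>Q\<in>\<Q>. E Q) \<inter> S R = E R"
proof -
  have "E Q \<inter> S R = {}" if "Q \<in> \<Q>" "Q \<noteq> R" for Q
    using assms(1)[OF that(1)] disjoint_support[OF that(1) assms(2) that(2)] by blast
  then show ?thesis using assms by blast
qed

lemma Int_support_in_sets:
  assumes "A \<in> hahn_extension M \<Q> S" and R: "R \<in> \<Q>"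
  shows "A \<inter> S R \<in> sets M"
  using assms(1) unfolding hahn_extension_def
proof (induction rule: sigma_sets.induct)
  case (Basic A)
  then consider "A \<in> sets M" | E where "\<forall>Q\<in>\<Q>. E Q \<in> sets M \<and> E Q \<subseteq> S Q" "A = (\<Union>Q\<in>\<Q>. E Q)"
    by blast
  then show ?case
  proof cases
    case 1
    then show ?thesis using sets_support[OF R] by blast
  next
    case 2
    then show ?thesis using UN_Int_support[OF _ R] R by auto
  qed
next
  case (Compl A)
  have "(space M - A) \<inter> S R = S R - A \<inter> S R"
    using sets.sets_into_space[OF sets_support[OF R]] by blast
  then show ?case using Compl sets_support[OF R] by auto
next
  case (Union A)
  have "(\<Union>i. A i \<inter> S R) \<in> sets M"
    using Union.IH by (intro sets.countable_UN) (simp add: image_subset_iff)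
  moreover have "(\<Union>i. A i) \<inter> S R = (\<Union>i. A i \<inter> S R)" by blast
  ultimately show ?case by (simp only:)
qed simp

lemma subset_support_in_sets:
  "A \<in> hahn_extension M \<Q> S \<Longrightarrow> R \<in> \<Q> \<Longrightarrow> A \<subseteq> S R \<Longrightarrow> A \<in> sets M"
  using Int_support_in_sets by (metis Int_absorb2)

lemma UN_in_hahn_extension:
  assumes "\<And>Q. Q \<in> \<Q> \<Longrightarrow> E Q \<in> hahn_extension M \<Q> S \<and> E Q \<subseteq> S Q"
  shows "(\<Union>Q\<in>\<Q>. E Q) \<in> hahn_extension M \<Q> S"
  unfolding hahn_extension_def using assms subset_support_in_sets
  by (intro sigma_sets.Basic UnI2 CollectI exI[of _ E]) blast

definition concentrated :: "'a measure \<Rightarrow> 'a measure set \<Rightarrow> bool" where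
  "concentrated P I \<longleftrightarrow> sets P = sets M \<and> countable I \<and> I \<subseteq> \<Q> \<and>
     emeasure P (space M - (\<Union>Q\<in>I. S Q)) = 0"

lemma sets_UN_support: "countable I \<Longrightarrow> I \<subseteq> \<Q> \<Longrightarrow> (\<Union>Q\<in>I. S Q) \<in> sets M"
  using sets_support by (intro sets.countable_UN') auto

lemma Int_UN_support_in_sets:
  assumes "A \<in> hahn_extension M \<Q> S" "countable I" "I \<subseteq> \<Q>"
  shows "A \<inter> (\<Union>Q\<in>I. S Q) \<in> sets M"
proof -
  have "(\<Union>Q\<in>I. A \<inter> S Q) \<in> sets M"
    using assms Int_support_in_sets by (intro sets.countable_UN') auto
  moreover have "A \<inter> (\<Union>Q\<in>I. S Q) = (\<Union>Q\<in>I. A \<inter> S Q)" by blast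
  ultimately show ?thesis by (simp only:)
qed

lemma emeasure_support_eq_0:
  assumes P: "concentrated P I" and R: "R \<in> \<Q>" "R \<notin> I"
  shows "emeasure P (S R) = 0"
proof -
  have I: "I \<subseteq> \<Q>" "countable I" and sets_P: "sets P = sets M"
    and null: "emeasure P (space M - (\<Union>Q\<in>I. S Q)) = 0"
    using P unfolding concentrated_def by auto
  have "S R \<inter> S Q = {}" if "Q \<in> I" for Q
    using disjoint_support[OF R(1) subsetD[OF I(1) that]] R(2) that by auto
  then have "S R \<subseteq> space M - (\<Union>Q\<in>I. S Q)"
    using sets.sets_into_space[OF sets_support[OF R(1)]] by blast
  moreover have "space M - (\<Union>Q\<in>I. S Q) \<in> sets P"
    using sets_UN_support[OF I(2,1)] sets_P by simp
  ultimately show ?thesis using null emeasure_eq_0 by blast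
qed

lemma infsum_emeasure_Int_support:
  assumes P: "concentrated P I" and B: "B \<in> hahn_extension M \<Q> S"
  shows "(\<Sum>\<^sub>\<infinity>Q\<in>{Q\<in>\<Q>. 0 < emeasure P (S Q)}. emeasure P (B \<inter> S Q)) =
    emeasure P (B \<inter> (\<Union>Q\<in>I. S Q))"
proof -
  have I: "sets P = sets M" "countable I" "I \<subseteq> \<Q>"
    using P by (auto simp: concentrated_def)
  have "(\<Sum>\<^sub>\<infinity>Q\<in>{Q\<in>\<Q>. 0 < emeasure P (S Q)}. emeasure P (B \<inter> S Q)) =
      (\<Sum>\<^sub>\<infinity>Q\<in>I. emeasure P (B \<inter> S Q))"
  proof (rule infsum_cong_neutral)
    fix Q assume "Q \<in> I - {Q\<in>\<Q>. 0 < emeasure P (S Q)}"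
    then have "emeasure P (S Q) = 0" "S Q \<in> sets P"
      using I sets_support by auto
    then show "emeasure P (B \<inter> S Q) = 0"
      by (meson emeasure_eq_0 Int_lower2)
  next
    fix Q assume "Q \<in> {Q\<in>\<Q>. 0 < emeasure P (S Q)} - I"
    then show "emeasure P (B \<inter> S Q) = 0"
      using emeasure_support_eq_0[OF P, of Q] by auto
  qed simp
  also have "\<dots> = emeasure P (\<Union>Q\<in>I. B \<inter> S Q)"
  proof (rule infsum_emeasure_disjoint)
    show "B \<inter> S Q \<in> sets P" if "Q \<in> I" for Q
      using Int_support_in_sets[OF B] I(1,3) that by blast
    show "disjoint_family_on (\<lambda>Q. B \<inter> S Q) I"
      unfolding disjoint_family_on_def
    proof (intro ballI impI)
      fix Q R assume "Q \<in> I" "R \<in> I" "Q \<noteq> R"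
      then have "S Q \<inter> S R = {}" using disjoint_support I(3) by blast
      then show "(B \<inter> S Q) \<inter> (B \<inter> S R) = {}" by blast
    qed
  qed (rule I(2))
  also have "(\<Union>Q\<in>I. B \<inter> S Q) = B \<inter> (\<Union>Q\<in>I. S Q)" by blast
  finally show ?thesis .
qed

lemma emeasure_loc_ext:
  assumes P: "concentrated P I" and A: "A \<in> hahn_extension M \<Q> S"
  shows "emeasure (loc_ext M \<Q> S P) A = emeasure P (A \<inter> (\<Union>Q\<in>I. S Q))"
proof -
  let ?U = "\<Union>Q\<in>I. S Q" and ?H = "hahn_extension M \<Q> S"
  have I: "sets P = sets M" "countable I" "I \<subseteq> \<Q>"
    using P by (auto simp: concentrated_def)
  have loc_ext_eq: "loc_ext M \<Q> S P = measure_of (space M) ?H (\<lambda>B. emeasure P (B \<inter> ?U))"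
    unfolding loc_ext_def using infsum_emeasure_Int_support[OF P]
    by (intro measure_of_eq[OF hahn_extension_subset_Pow]) (simp only: sigma_sets_hahn_extension)
  have pos: "positive ?H (\<lambda>B. emeasure P (B \<inter> ?U))"
    by (simp add: positive_def)
  have ca: "countably_additive ?H (\<lambda>B. emeasure P (B \<inter> ?U))"
  proof (rule countably_additiveI)
    fix F :: "nat \<Rightarrow> 'a set" assume F: "range F \<subseteq> ?H" "disjoint_family F"
    have "(\<Sum>i. emeasure P (F i \<inter> ?U)) = emeasure P (\<Union>i. F i \<inter> ?U)"
      using F I Int_UN_support_in_sets
      by (intro suminf_emeasure) (auto simp: disjoint_family_on_def)
    also have "(\<Union>i. F i \<inter> ?U) = (\<Union>i. F i) \<inter> ?U" by blast
    finally show "(\<Sum>i. emeasure P (F i \<inter> ?U)) = emeasure P ((\<Union>i. F i) \<inter> ?U)" .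
  qed
  show ?thesis
    unfolding loc_ext_eq by (rule emeasure_measure_of_sigma[OF sigma_algebra_hahn_extension pos ca A])
qed

lemma emeasure_loc_ext_eq_0_iff:
  assumes P: "concentrated P I" and A: "A \<in> hahn_extension M \<Q> S"
  shows "emeasure (loc_ext M \<Q> S P) A = 0 \<longleftrightarrow> (\<forall>R\<in>\<Q>. emeasure P (A \<inter> S R) = 0)"
proof -
  have I: "sets P = sets M" "countable I" "I \<subseteq> \<Q>"
    using P unfolding concentrated_def by auto
  have A_R: "A \<inter> S R \<in> sets P" if "R \<in> \<Q>" for R
    using Int_support_in_sets[OF A that] I(1) by simp
  have "A \<inter> (\<Union>Q\<in>I. S Q) = (\<Union>Q\<in>I. A \<inter> S Q)" by blast
  then have L_A: "emeasure (loc_ext M \<Q> S P) A = emeasure P (\<Union>Q\<in>I. A \<inter> S Q)"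
    using emeasure_loc_ext[OF P A] by simp
  show ?thesis
  proof
    assume "emeasure (loc_ext M \<Q> S P) A = 0"
    then have null: "emeasure P (\<Union>Q\<in>I. A \<inter> S Q) = 0" using L_A by simp
    have UN: "(\<Union>Q\<in>I. A \<inter> S Q) \<in> sets P"
      using I A_R by (intro sets.countable_UN') auto
    show "\<forall>R\<in>\<Q>. emeasure P (A \<inter> S R) = 0"
    proof
      fix R assume R: "R \<in> \<Q>"
      show "emeasure P (A \<inter> S R) = 0"
      proof (cases "R \<in> I")
        case True
        then show ?thesis using emeasure_eq_0[OF UN null] by blast
      next
        case False
        then show ?thesis
          using emeasure_eq_0[of "S R" P] emeasure_support_eq_0[OF P R] sets_support[OF R] I(1)
          by blast
      qed
    qed
  next
    assume "\<forall>R\<in>\<Q>. emeasure P (A \<inter> S R) = 0"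
    then have "(\<Union>Q\<in>I. A \<inter> S Q) \<in> null_sets P"
      using I A_R by (intro null_sets_UN') (auto simp: null_sets_def)
    then show "emeasure (loc_ext M \<Q> S P) A = 0" using L_A by auto
  qed
qed

lemma concentrated_absolutely_continuous:
  assumes P: "concentrated P I" and Q: "sets Q = sets M" "absolutely_continuous P Q"
  shows "concentrated Q I"
proof -
  have "space M - (\<Union>R\<in>I. S R) \<in> null_sets P"
    using P sets_UN_support unfolding concentrated_def by auto
  then show ?thesis
    using P Q unfolding concentrated_def absolutely_continuous_def by auto
qed

lemma absolutely_continuous_loc_ext:
  assumes P: "concentrated P I" and Q: "sets Q = sets M" "absolutely_continuous P Q"
  shows "absolutely_continuous (loc_ext M \<Q> S P) (loc_ext M \<Q> S Q)"
  unfolding absolutely_continuous_def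
proof
  fix A assume A_null: "A \<in> null_sets (loc_ext M \<Q> S P)"
  then have A: "A \<in> hahn_extension M \<Q> S" by auto
  have "A \<inter> S R \<in> null_sets P" if "R \<in> \<Q>" for R
    using A_null emeasure_loc_ext_eq_0_iff[OF P A] Int_support_in_sets[OF A that] P that
    by (auto simp: concentrated_def)
  then have "\<forall>R\<in>\<Q>. emeasure Q (A \<inter> S R) = 0"
    using Q(2) unfolding absolutely_continuous_def by auto
  then show "A \<in> null_sets (loc_ext M \<Q> S Q)"
    using emeasure_loc_ext_eq_0_iff[OF concentrated_absolutely_continuous[OF P Q] A] A by auto
qed

lemma emeasure_loc_ext_space:
  assumes P: "concentrated P I"
  shows "emeasure (loc_ext M \<Q> S P) (space M) = emeasure P (space M)"
proof -
  let ?U = "\<Union>Q\<in>I. S Q"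
  have I: "sets P = sets M" "countable I" "I \<subseteq> \<Q>" "emeasure P (space M - ?U) = 0"
    using P unfolding concentrated_def by auto
  have "emeasure (loc_ext M \<Q> S P) (space M) = emeasure P (space M - (space M - ?U))"
    using emeasure_loc_ext[OF P sets_in_hahn_extension[OF sets.top]] by (simp add: Diff_Diff_Int)
  also have "\<dots> = emeasure P (space M)"
    using I sets_UN_support sets.top[of P] sets_eq_imp_space_eq[OF I(1)]
    by (intro emeasure_Diff_null_set) auto
  finally show ?thesis .
qed

lemma prob_on_loc_ext:
  assumes "prob_on M P" and P: "concentrated P I"
  shows "prob_on (hahn_ext_space M \<Q> S) (loc_ext M \<Q> S P)"
proof -
  have "emeasure P (space M) = 1"
    using assms(1) prob_space.emeasure_space_1 sets_eq_imp_space_eq unfolding prob_on_def by metis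
  then show ?thesis
    using emeasure_loc_ext_space[OF P] unfolding prob_on_def by (auto intro: prob_spaceI)
qed

end

locale disjoint_pre_hahn_loc = disjoint_supports M \<Q> S for M \<Q> S +
  fixes \<P> :: "'a measure set"
  assumes pre_hahn_loc: "pre_hahn_loc M \<P> \<Q> S"
begin

abbreviation L :: "'a measure \<Rightarrow> 'a measure" where
  "L \<equiv> loc_ext M \<Q> S"

lemma prob_on_localizer: "Q \<in> \<Q> \<Longrightarrow> prob_on M Q"
  and emeasure_localizer_support:
    "Q \<in> \<Q> \<Longrightarrow> R \<in> \<Q> \<Longrightarrow> emeasure Q (S R) = (if Q = R then 1 else 0)"
  using pre_hahn_loc unfolding pre_hahn_loc_def by auto

lemma concentrated_localizer:
  assumes Q: "Q \<in> \<Q>"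
  shows "concentrated Q {Q}"
proof -
  have "prob_space Q" and sets_Q: "sets Q = sets M"
    using prob_on_localizer[OF Q] unfolding prob_on_def by auto
  then have "emeasure Q (space M - S Q) = emeasure Q (space Q) - emeasure Q (S Q)"
    using emeasure_compl[of "S Q" Q] sets_support[OF Q] sets_eq_imp_space_eq[OF sets_Q]
    by (simp add: prob_space.emeasure_space_1 emeasure_localizer_support[OF Q Q])
  also have "\<dots> = 0"
    using \<open>prob_space Q\<close> by (simp add: prob_space.emeasure_space_1 emeasure_localizer_support[OF Q Q])
  finally show ?thesis
    using Q sets_Q unfolding concentrated_def by simp
qed

lemma emeasure_loc_ext_localizer:
  "Q \<in> \<Q> \<Longrightarrow> A \<in> hahn_extension M \<Q> S \<Longrightarrow> emeasure (L Q) A = emeasure Q (A \<inter> S Q)"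
  using emeasure_loc_ext[OF concentrated_localizer] by simp

lemma emeasure_localizer_Int_support:
  assumes Q: "Q \<in> \<Q>" and X: "X \<in> sets M"
  shows "emeasure Q (X \<inter> S Q) = emeasure Q X"
proof -
  have "space M - S Q \<in> null_sets Q"
    using concentrated_localizer[OF Q] sets_support[OF Q] unfolding concentrated_def by auto
  moreover have "X \<inter> S Q = X - (space M - S Q)"
    using sets.sets_into_space[OF X] by blast
  ultimately show ?thesis
    using X concentrated_localizer[OF Q] by (simp add: emeasure_Diff_null_set concentrated_def)
qed

lemma emeasure_loc_ext_localizer_support:
  assumes Q: "Q \<in> \<Q>" and R: "R \<in> \<Q>"
  shows "emeasure (L Q) (S R) = (if Q = R then 1 else 0)"
  using emeasure_loc_ext_localizer[OF Q sets_in_hahn_extension[OF sets_support[OF R]]]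
    emeasure_localizer_support[OF Q Q] disjoint_support[OF R Q]
  by auto

lemma inj_on_loc_ext_localizers: "inj_on L \<Q>"
proof (rule inj_onI)
  fix Q R assume "Q \<in> \<Q>" "R \<in> \<Q>" "L Q = L R"
  then show "Q = R"
    using emeasure_loc_ext_localizer_support[of Q Q] emeasure_loc_ext_localizer_support[of R Q]
    by (metis zero_neq_one)
qed

lemma concentrated_convex_combination:
  assumes sets_N: "sets N = sets M" and Qs: "\<And>n. Qs n \<in> \<Q>"
    and N: "\<forall>A\<in>sets M. emeasure N A = (\<Sum>n. c n * emeasure (Qs n) A)"
  shows "concentrated N (range Qs)"
proof -
  let ?C = "space M - (\<Union>Q\<in>range Qs. S Q)"
  have C: "?C \<in> sets M"
    using Qs sets_UN_support[of "range Qs"] by auto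
  have "emeasure (Qs n) ?C = 0" for n
  proof (rule emeasure_eq_0)
    show "space M - S (Qs n) \<in> sets (Qs n)" "emeasure (Qs n) (space M - S (Qs n)) = 0"
      using concentrated_localizer[OF Qs] sets_support[OF Qs] unfolding concentrated_def by auto
  qed blast
  then have "emeasure N ?C = 0"
    using N C by simp
  then show ?thesis
    using sets_N Qs unfolding concentrated_def by auto
qed

lemma emeasure_loc_ext_convex_combination:
  assumes sets_N: "sets N = sets M" and Qs: "\<And>n. Qs n \<in> \<Q>"
    and N: "\<forall>A\<in>sets M. emeasure N A = (\<Sum>n. c n * emeasure (Qs n) A)"
    and A: "A \<in> hahn_extension M \<Q> S"
  shows "emeasure (L N) A = (\<Sum>n. c n * emeasure (L (Qs n)) A)"
proof -
  let ?U = "\<Union>Q\<in>range Qs. S Q"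
  have A_U: "A \<inter> ?U \<in> sets M"
    using Int_UN_support_in_sets[OF A, of "range Qs"] Qs by blast
  have "emeasure (Qs n) (A \<inter> ?U) = emeasure (L (Qs n)) A" for n
  proof -
    have "emeasure (Qs n) (A \<inter> ?U) = emeasure (Qs n) (A \<inter> ?U \<inter> S (Qs n))"
      using emeasure_localizer_Int_support[OF Qs A_U] by simp
    also have "A \<inter> ?U \<inter> S (Qs n) = A \<inter> S (Qs n)" by blast
    finally show ?thesis
      using emeasure_loc_ext_localizer[OF Qs A] by simp
  qed
  then show ?thesis
    using emeasure_loc_ext[OF concentrated_convex_combination[OF sets_N Qs N] A] N A_U by simp
qed

lemma loc_ext_in_sconv:
  assumes "N \<in> sconv M \<Q>"
  shows "L N \<in> sconv (hahn_ext_space M \<Q> S) (L ` \<Q>)"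
proof -
  obtain c Qs where sets_N: "sets N = sets M" and Qs: "\<And>n. Qs n \<in> \<Q>" and c: "(\<Sum>n. c n) = 1"
    and N: "\<forall>A\<in>sets M. emeasure N A = (\<Sum>n. c n * emeasure (Qs n) A)"
    using assms unfolding sconv_def by blast
  show ?thesis
    unfolding sconv_def using Qs c emeasure_loc_ext_convex_combination[OF sets_N Qs N]
    by (intro CollectI conjI exI[of _ c] exI[of _ "\<lambda>n. L (Qs n)"]) auto
qed

lemma sconv_concentrated:
  assumes "N \<in> sconv M \<Q>"
  obtains I where "concentrated N I"
  using assms concentrated_convex_combination unfolding sconv_def by blast

lemma concentrated_member:
  assumes P: "P \<in> \<P>"
  obtains N I where "N \<in> sconv M \<Q>" "absolutely_continuous N P" "concentrated N I"
    "concentrated P I"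
proof -
  obtain N where N: "N \<in> sconv M \<Q>" and N_P: "absolutely_continuous N P"
    using pre_hahn_loc P unfolding pre_hahn_loc_def ac_fam_def by blast
  obtain I where "concentrated N I"
    using sconv_concentrated[OF N] .
  moreover have "sets P = sets M"
    using pre_hahn_loc P unfolding pre_hahn_loc_def prob_on_def by blast
  ultimately show ?thesis
    using that N N_P concentrated_absolutely_continuous by blast
qed

lemma emeasure_loc_ext_UN_Diff:
  assumes E: "\<And>R. R \<in> \<Q> \<Longrightarrow> E R \<in> hahn_extension M \<Q> S \<and> E R \<subseteq> S R"
    and Q: "Q \<in> \<Q>" and F: "F \<in> hahn_extension M \<Q> S"
  shows "emeasure (L Q) ((\<Union>R\<in>\<Q>. E R) - F) = emeasure (L Q) (E Q - F)"
proof -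
  have H: "(\<Union>R\<in>\<Q>. E R) - F \<in> hahn_extension M \<Q> S" "E Q - F \<in> hahn_extension M \<Q> S"
    using sets.Diff[of _ "hahn_ext_space M \<Q> S"] UN_in_hahn_extension[OF E] E[OF Q] F by auto
  have "((\<Union>R\<in>\<Q>. E R) - F) \<inter> S Q = (E Q - F) \<inter> S Q"
    using UN_Int_support[of E Q] E Q by blast
  then show ?thesis
    using emeasure_loc_ext_localizer[OF Q H(1)] emeasure_loc_ext_localizer[OF Q H(2)] by simp
qed

lemma pre_hahn_loc_loc_ext:
  "pre_hahn_loc (hahn_ext_space M \<Q> S) (L ` \<P>) (L ` \<Q>) (S \<circ> inv_into \<Q> L)"
proof -
  have prob_P: "prob_on M P" and sets_P: "sets P = sets M" if "P \<in> \<P>" for P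
    using pre_hahn_loc that unfolding pre_hahn_loc_def prob_on_def by auto
  have "prob_on (hahn_ext_space M \<Q> S) (L P)" if "P \<in> \<P>" for P
    using concentrated_member[OF that] prob_on_loc_ext[OF prob_P[OF that]] by metis
  moreover have "prob_on (hahn_ext_space M \<Q> S) (L Q)" if "Q \<in> \<Q>" for Q
    using prob_on_loc_ext[OF prob_on_localizer concentrated_localizer] that by blast
  moreover have "\<exists>P\<in>\<P>. absolutely_continuous (L P) (L Q)" if Q: "Q \<in> \<Q>" for Q
  proof -
    obtain P where "P \<in> \<P>" "absolutely_continuous P Q"
      using pre_hahn_loc Q unfolding pre_hahn_loc_def ac_fam_def by blast
    moreover obtain I where "concentrated P I"
      using concentrated_member[OF \<open>P \<in> \<P>\<close>] by blast
    ultimately show ?thesis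
      using absolutely_continuous_loc_ext prob_on_localizer[OF Q] unfolding prob_on_def by blast
  qed
  moreover have "\<exists>N\<in>sconv (hahn_ext_space M \<Q> S) (L ` \<Q>). absolutely_continuous N (L P)"
    if P: "P \<in> \<P>" for P
  proof -
    obtain N I where "N \<in> sconv M \<Q>" "absolutely_continuous N P" "concentrated N I"
      using concentrated_member[OF P] by blast
    then show ?thesis
      using loc_ext_in_sconv absolutely_continuous_loc_ext sets_P[OF P] by blast
  qed
  ultimately show ?thesis
    using inj_on_loc_ext_localizers sets_support
    by (auto simp: pre_hahn_loc_def ac_fam_def emeasure_loc_ext_localizer_support inj_on_eq_iff
        intro: sets_in_hahn_extension)
qed

lemma hahn_loc_loc_ext:
  "hahn_loc (hahn_ext_space M \<Q> S) (L ` \<P>) (L ` \<Q>) (S \<circ> inv_into \<Q> L)"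
  unfolding hahn_loc_def
proof (intro conjI pre_hahn_loc_loc_ext allI impI)
  fix E assume E: "\<forall>Q\<in>L ` \<Q>. E Q \<in> sets (hahn_ext_space M \<Q> S) \<and> E Q \<subseteq> (S \<circ> inv_into \<Q> L) Q"
  define E' where "E' Q = E (L Q)" for Q
  have E': "E' Q \<in> hahn_extension M \<Q> S \<and> E' Q \<subseteq> S Q" if "Q \<in> \<Q>" for Q
    using E that inj_on_loc_ext_localizers by (simp add: E'_def)
  show "\<exists>T\<in>sets (hahn_ext_space M \<Q> S). (\<forall>Q\<in>L ` \<Q>. emeasure Q (E Q - T) = 0) \<and>
    (\<forall>F\<in>sets (hahn_ext_space M \<Q> S). (\<forall>Q\<in>L ` \<Q>. emeasure Q (E Q - F) = 0) \<longrightarrow>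
      (\<forall>Q\<in>L ` \<Q>. emeasure Q (T - F) = 0))"
  proof (intro bexI conjI ballI impI)
    show "(\<Union>Q\<in>\<Q>. E' Q) \<in> sets (hahn_ext_space M \<Q> S)"
      using UN_in_hahn_extension[OF E'] by simp
  next
    fix Q' assume "Q' \<in> L ` \<Q>"
    then have "E Q' - (\<Union>Q\<in>\<Q>. E' Q) = {}" by (auto simp: E'_def)
    then show "emeasure Q' (E Q' - (\<Union>Q\<in>\<Q>. E' Q)) = 0" by (metis emeasure_empty)
  next
    fix F Q' assume F: "F \<in> sets (hahn_ext_space M \<Q> S)"
      and null: "\<forall>Q\<in>L ` \<Q>. emeasure Q (E Q - F) = 0" and "Q' \<in> L ` \<Q>"
    then obtain Q where "Q \<in> \<Q>" "Q' = L Q" by blast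
    then show "emeasure Q' ((\<Union>Q\<in>\<Q>. E' Q) - F) = 0"
      using emeasure_loc_ext_UN_Diff[OF E' _ F[simplified]] null by (simp add: E'_def)
  qed
qed

end

theorem lemma4p5:
  fixes M :: "'a measure" and \<P> \<Q> :: "'a measure set" and S :: "'a measure \<Rightarrow> 'a set"
  assumes "pre_hahn_loc M \<P> \<Q> S"
    and "\<forall>Q\<in>\<Q>. \<forall>R\<in>\<Q>. Q \<noteq> R \<longrightarrow> S Q \<inter> S R = {}"
  shows "hahn_localizable (hahn_ext_space M \<Q> S) (loc_ext M \<Q> S ` \<P>) \<and>
         (\<exists>S'. hahn_loc (hahn_ext_space M \<Q> S) (loc_ext M \<Q> S ` \<P>) (loc_ext M \<Q> S ` \<Q>) S' \<and>
               (\<forall>Q\<in>\<Q>. S' (loc_ext M \<Q> S Q) = S Q))"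
proof -
  interpret disjoint_pre_hahn_loc M \<Q> S \<P>
    using assms by unfold_locales (auto simp: pre_hahn_loc_def)
  have "\<forall>Q\<in>\<Q>. (S \<circ> inv_into \<Q> L) (L Q) = S Q"
    using inj_on_loc_ext_localizers by simp
  then show ?thesis
    using hahn_loc_loc_ext unfolding hahn_localizable_def by blast
qed

end
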